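(* Let $H=K_{i_1,1,\dots,1}$ be the complete multipartite graph with $m$ parts, one part of size $i_1\le 2$ and all other parts of size $1$. Then $b_H(n)=\Theta(n^{m-1})$ as $n\to\infty$.
   Context: For a graph $G$, $\mathrm{cl}(G)$ denotes its clique complex. For a finite simple graph $H$ and a fixed field $\mathbb{K}$, $b_H(n)=\max_G \sum_{i\ge -1}\dim_{\mathbb{K}}\widetilde H_i(\mathrm{cl}(G);\mathbb{K})$, where $G$ ranges over all simple graphs on at most $n$ vertices containing no induced copy of $H$ (reduced homology, the empty graph contributing $1$). *)

theory Defs
  imports Main "HOL-Library.Function_Algebras" "HOL-Library.Landau_Symbols"
begin

definition simple_graph :: "'a set \<Rightarrow> 'a set set \<Rightarrow> bool" where
  "simple_graph V E \<longleftrightarrow> finite V \<and> (\<forall>e\<in>E. \<exists>u v. e = {u, v} \<and> u \<noteq> v \<and> u \<in> V \<and> v \<in> V)"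

definition has_induced_copy :: "'b set \<Rightarrow> 'b set set \<Rightarrow> 'a set \<Rightarrow> 'a set set \<Rightarrow> bool" where
  "has_induced_copy VH EH V E \<longleftrightarrow>
     (\<exists>f. inj_on f VH \<and> f ` VH \<subseteq> V \<and>
          (\<forall>u\<in>VH. \<forall>v\<in>VH. u \<noteq> v \<longrightarrow> ({u, v} \<in> EH \<longleftrightarrow> {f u, f v} \<in> E)))"

text \<open>Complete multipartite graph with part sizes given by the list ps;
  part j consists of the vertices (j,k) with k < ps!j.\<close>
definition cmp_vertices :: "nat list \<Rightarrow> (nat \<times> nat) set" where
  "cmp_vertices ps = {(j, k). j < length ps \<and> k < ps ! j}"

definition cmp_edges :: "nat list \<Rightarrow> (nat \<times> nat) set set" where
  "cmp_edges ps = {{x, y} | x y. x \<in> cmp_vertices ps \<and> y \<in> cmp_vertices ps \<and> fst x \<noteq> fst y}"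

text \<open>Clique complex: faces are the finite cliques; an i-face has i+1 vertices
  (the empty face is the unique (-1)-face, giving reduced homology).\<close>
definition is_clique :: "nat set \<Rightarrow> nat set set \<Rightarrow> nat set \<Rightarrow> bool" where
  "is_clique V E \<sigma> \<longleftrightarrow> \<sigma> \<subseteq> V \<and> (\<forall>u\<in>\<sigma>. \<forall>v\<in>\<sigma>. u \<noteq> v \<longrightarrow> {u, v} \<in> E)"

definition clique_faces :: "nat set \<Rightarrow> nat set set \<Rightarrow> int \<Rightarrow> nat set set" where
  "clique_faces V E i = {\<sigma>. is_clique V E \<sigma> \<and> finite \<sigma> \<and> int (card \<sigma>) = i + 1}"

definition chains :: "nat set \<Rightarrow> nat set set \<Rightarrow> int \<Rightarrow> (nat set \<Rightarrow> 'k::field) set" where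
  "chains V E i = {c. \<forall>\<sigma>. \<sigma> \<notin> clique_faces V E i \<longrightarrow> c \<sigma> = 0}"

definition chain_scale :: "'k::field \<Rightarrow> (nat set \<Rightarrow> 'k) \<Rightarrow> (nat set \<Rightarrow> 'k)" where
  "chain_scale a c = (\<lambda>\<sigma>. a * c \<sigma>)"

text \<open>Simplicial boundary map C_i -> C_(i-1), vertices ordered as natural numbers:
  d[x_0<...<x_i] = sum_j (-1)^j [x_0,...,x_j omitted,...,x_i].\<close>
definition boundary :: "nat set \<Rightarrow> nat set set \<Rightarrow> int \<Rightarrow> (nat set \<Rightarrow> 'k::field) \<Rightarrow> (nat set \<Rightarrow> 'k)" where
  "boundary V E i c = (\<lambda>\<tau>. if \<tau> \<in> clique_faces V E (i - 1) then
      (\<Sum>x\<in>{x \<in> V - \<tau>. insert x \<tau> \<in> clique_faces V E i}.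
          (-1) ^ card {y \<in> \<tau>. y < x} * c (insert x \<tau>))
    else 0)"

text \<open>dim of reduced homology H~_i(cl(G); k) = dim Z_i - dim B_i.\<close>
definition reduced_betti :: "'k::field itself \<Rightarrow> nat set \<Rightarrow> nat set set \<Rightarrow> int \<Rightarrow> nat" where
  "reduced_betti K V E i =
     vector_space.dim (chain_scale :: 'k \<Rightarrow> _) {c \<in> chains V E i. boundary V E i c = 0}
     - vector_space.dim (chain_scale :: 'k \<Rightarrow> _) (boundary V E (i + 1) ` chains V E (i + 1))"

definition total_betti :: "'k::field itself \<Rightarrow> nat set \<Rightarrow> nat set set \<Rightarrow> nat" where
  "total_betti K V E = (\<Sum>i\<in>{-1..int (card V)}. reduced_betti K V E i)"

text \<open>b_H(n): maximum total reduced Betti number of clique complexes of induced-H-free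
  graphs on at most n vertices (w.l.o.g. vertex set contained in {0..<n}).\<close>
definition b_H :: "'k::field itself \<Rightarrow> 'b set \<Rightarrow> 'b set set \<Rightarrow> nat \<Rightarrow> nat" where
  "b_H K VH EH n = Max {total_betti K V E | V E.
      simple_graph V E \<and> V \<subseteq> {..<n} \<and> \<not> has_induced_copy VH EH V E}"

end

theory Submission
  imports Defs
begin

text \<open>Upper bound: delete the largest vertex \<open>v\<close> of \<open>G\<close>. The link of \<open>v\<close> in \<open>cl G\<close> is the clique
  complex of its neighbourhood \<open>N(v)\<close>, and the exact sequence of the pair \<open>(cl G, cl (G - v))\<close>
  gives \<open>\<beta>(G) \<le> \<beta>(G - v) + \<beta>(N(v))\<close> for total Betti numbers. If \<open>G\<close> has no induced
  \<open>K_{i1,1^k}\<close> then \<open>N(v)\<close> has no induced \<open>K_{i1,1^(k-1)}\<close>, so induction gives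
  \<open>\<beta>(G) \<le> (n + 1)^k\<close>; for \<open>k = 0\<close> the graph is empty (\<open>i1 = 1\<close>) or complete, hence a cone
  (\<open>i1 = 2\<close>).

  Lower bound: the complete \<open>k\<close>-partite graph with parts of size \<open>s = n div k\<close> has no clique on
  \<open>k + 1\<close> vertices, so it is \<open>K_{i1,1^k}\<close>-free and its top reduced Betti number is at least
  the number \<open>s^k\<close> of its facets minus the number \<open>\<le> (k s)^(k-1)\<close> of its ridges.\<close>

section \<open>Dimension bounds inside the span of a finite set\<close>

context vector_space
begin

lemma finite_if_independent_in_span:
  assumes "independent B" "B \<subseteq> span W" "finite W"
  shows "finite B"
  using independent_span_bound[OF assms(3,1,2)] by simp

lemma dim_mono_finite_span:
  assumes "S \<subseteq> T" "T \<subseteq> span W" "finite W"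
  shows "dim S \<le> dim T"
proof -
  obtain B where B: "B \<subseteq> T" "independent B" "T \<subseteq> span B" "card B = dim T"
    using basis_exists by blast
  have "finite B"
    using finite_if_independent_in_span[OF B(2) _ assms(3)] B(1) assms(2) by blast
  moreover have "S \<subseteq> span B" using assms(1) B(3) by blast
  ultimately show ?thesis using dim_le_card B(4) by metis
qed

lemma card_le_dim_finite_span:
  assumes "A \<subseteq> S" "independent A" "S \<subseteq> span W" "finite W"
  shows "card A \<le> dim S"
proof -
  obtain B where B: "A \<subseteq> B" "B \<subseteq> S" "independent B" "S \<subseteq> span B"
    using maximal_independent_subset_extend[OF assms(1,2)] by blast
  have "finite B"
    using finite_if_independent_in_span[OF B(3) _ assms(4)] B(2) assms(3) by blast
  then show ?thesis
    using card_mono[OF _ B(1)] basis_card_eq_dim[OF B(2,4,3)] by simp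
qed

lemma dim_eq_0_if_subset_zero:
  assumes "S \<subseteq> {0}"
  shows "dim S = 0"
  using dim_le_card[of S "{}"] assms by simp

lemma independent_Un_if_image_independent:
  assumes lin: "Vector_Spaces.linear scale scale f"
    and BK: "independent BK" "finite BK" "\<And>x. x \<in> BK \<Longrightarrow> f x = 0"
    and P: "finite P" "inj_on f P" "independent (f ` P)"
  shows "independent (BK \<union> P)"
proof (rule independent_if_scalars_zero)
  interpret f: Vector_Spaces.linear scale scale f by fact
  have disjoint: "BK \<inter> P = {}"
  proof -
    have "0 \<notin> f ` P" using P(3) dependent_zero by blast
    then show ?thesis using BK(3) by (metis disjoint_iff imageI)
  qed
  show "finite (BK \<union> P)" using BK(2) P(1) by simp
  fix h x assume sum0: "(\<Sum>x\<in>BK \<union> P. h x *s x) = 0" and x: "x \<in> BK \<union> P"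
  have split: "(\<Sum>x\<in>BK \<union> P. h x *s x) = (\<Sum>x\<in>BK. h x *s x) + (\<Sum>x\<in>P. h x *s x)"
    using sum.union_disjoint[OF BK(2) P(1) disjoint] .
  have "f (\<Sum>x\<in>BK \<union> P. h x *s x) = (\<Sum>x\<in>P. h x *s f x)"
    unfolding split using BK(3) by (simp add: f.add f.sum f.scale)
  also have "\<dots> = (\<Sum>y\<in>f ` P. h (the_inv_into P f y) *s y)"
    using P(2) by (simp add: sum.reindex the_inv_into_f_f)
  finally have "(\<Sum>y\<in>f ` P. h (the_inv_into P f y) *s y) = 0"
    using sum0 by simp
  then have "h (the_inv_into P f y) = 0" if "y \<in> f ` P" for y
    using independentD[OF P(3) finite_imageI[OF P(1)] subset_refl,
        of "\<lambda>y. h (the_inv_into P f y)"] that by blast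
  then have hP: "h u = 0" if "u \<in> P" for u
    using that P(2) by (metis imageI the_inv_into_f_f)
  then have "(\<Sum>x\<in>BK. h x *s x) = 0"
    using sum0 split by simp
  then have "h u = 0" if "u \<in> BK" for u
    using independentD[OF BK(1,2) subset_refl] that by blast
  then show "h x = 0" using x hP by blast
qed

theorem rank_nullity_finite_span:
  assumes lin: "Vector_Spaces.linear scale scale f"
    and S: "subspace S" "S \<subseteq> span W" and W: "finite W"
  shows "dim S = dim {x\<in>S. f x = 0} + dim (f ` S)"
proof -
  interpret f: Vector_Spaces.linear scale scale f by fact
  let ?K = "{x\<in>S. f x = 0}"
  obtain BK where BK: "BK \<subseteq> ?K" "independent BK" "?K \<subseteq> span BK" "card BK = dim ?K"
    using basis_exists by blast
  have finBK: "finite BK"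
    using finite_if_independent_in_span[OF BK(2) _ W] BK(1) S(2) by blast
  obtain C where C: "C \<subseteq> f ` S" "independent C" "f ` S \<subseteq> span C" "card C = dim (f ` S)"
    using basis_exists by blast
  have finC: "finite C"
    using finite_if_independent_in_span[OF C(2) _ finite_imageI[OF W]] C(1) f.spans_image[OF S(2)]
    by blast
  obtain P where P: "P \<subseteq> S" "bij_betw f P C"
  proof -
    obtain P where "P \<subseteq> S" "inj_on f P" "C = f ` P"
      using C(1) subset_image_inj by metis
    then show thesis using that by (simp add: bij_betw_def)
  qed
  have finP: "finite P" using P(2) finC bij_betw_finite by blast
  have disjoint: "BK \<inter> P = {}"
  proof -
    have "0 \<notin> f ` P" using P(2) C(2) dependent_zero by (auto simp: bij_betw_def)
    then show ?thesis using BK(1) by (auto intro: imageI)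
  qed
  have spanning: "S \<subseteq> span (BK \<union> P)"
  proof
    fix x assume x: "x \<in> S"
    have "f x \<in> span (f ` P)" using C(3) x P(2) by (auto simp: bij_betw_def)
    then obtain y where y: "y \<in> span P" "f x = f y" using f.span_image by blast
    have "y \<in> S" using y(1) P(1) S(1) span_minimal by blast
    then have "x - y \<in> ?K" using x y(2) S(1) by (simp add: subspace_diff f.diff)
    then have "x - y \<in> span (BK \<union> P)" using BK(3) span_mono[of BK "BK \<union> P"] by blast
    moreover have "y \<in> span (BK \<union> P)" using y(1) span_mono[of P "BK \<union> P"] by blast
    ultimately show "x \<in> span (BK \<union> P)" using span_add by fastforce
  qed
  have indep: "independent (BK \<union> P)"
    using independent_Un_if_image_independent[OF lin BK(2) finBK _ finP] BK(1) P(2) C(2)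
    by (auto simp: bij_betw_def)
  have "card (BK \<union> P) = dim S"
  proof (rule antisym)
    show "card (BK \<union> P) \<le> dim S"
      using card_le_dim_finite_span[OF _ indep S(2) W] BK(1) P(1) by blast
    show "dim S \<le> card (BK \<union> P)" using dim_le_card[OF spanning] finBK finP by simp
  qed
  moreover have "card (BK \<union> P) = card BK + card C"
    using card_Un_disjoint[OF finBK finP disjoint] bij_betw_same_card[OF P(2)] by simp
  ultimately show ?thesis using BK(4) C(4) by simp
qed

end

section \<open>Chains and reduced Betti numbers of clique complexes\<close>

interpretation chain_space: vector_space "chain_scale :: 'k::field \<Rightarrow> (nat set \<Rightarrow> 'k) \<Rightarrow> _"
  by unfold_locales (auto simp: chain_scale_def fun_eq_iff algebra_simps)

lemma chain_scale_apply [simp]: "chain_scale a c x = a * c x"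
  by (simp add: chain_scale_def)

lemma sum_fun_apply: "(sum f A) x = (\<Sum>a\<in>A. f a x)"
  by (induction A rule: infinite_finite_induct) auto

definition unit_chain :: "nat set \<Rightarrow> nat set \<Rightarrow> 'k::field" where
  "unit_chain \<sigma> = (\<lambda>\<tau>. if \<tau> = \<sigma> then 1 else 0)"

lemma unit_chain_apply: "unit_chain \<sigma> \<tau> = (if \<tau> = \<sigma> then 1 else 0)"
  by (simp add: unit_chain_def)

definition cycles :: "'k::field itself \<Rightarrow> nat set \<Rightarrow> nat set set \<Rightarrow> int \<Rightarrow> (nat set \<Rightarrow> 'k) set" where
  "cycles K V E i = {c \<in> chains V E i. boundary V E i c = 0}"

definition boundaries :: "'k::field itself \<Rightarrow> nat set \<Rightarrow> nat set set \<Rightarrow> int \<Rightarrow> (nat set \<Rightarrow> 'k) set" where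
  "boundaries K V E i = boundary V E (i + 1) ` chains V E (i + 1)"

lemma reduced_betti_eq_dim_cycles_boundaries:
  "reduced_betti K V E i = chain_space.dim (cycles K V E i) - chain_space.dim (boundaries K V E i)"
  by (simp add: reduced_betti_def cycles_def boundaries_def)

lemma clique_faces_subset_Pow: "clique_faces V E i \<subseteq> Pow V"
  by (auto simp: clique_faces_def is_clique_def)

lemma finite_clique_faces: "finite V \<Longrightarrow> finite (clique_faces V E i)"
  using finite_subset[OF clique_faces_subset_Pow] by simp

lemma clique_faces_eq_empty:
  assumes "finite V" "\<not> (-1 \<le> i \<and> i < int (card V))"
  shows "clique_faces V E i = {}"
proof (rule ccontr)
  assume "clique_faces V E i \<noteq> {}"
  then obtain \<sigma> where \<sigma>: "\<sigma> \<subseteq> V" "int (card \<sigma>) = i + 1"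
    by (auto simp: clique_faces_def is_clique_def)
  then show False using card_mono[OF assms(1) \<sigma>(1)] assms(2) by linarith
qed

lemma subspace_chains: "chain_space.subspace (chains V E i)"
  unfolding chain_space.subspace_def chains_def by (auto simp: plus_fun_def)

lemma chains_subset_span_unit_chains:
  assumes "finite V"
  shows "chains V E i \<subseteq> chain_space.span ((unit_chain :: _ \<Rightarrow> _ \<Rightarrow> 'k::field) ` clique_faces V E i)"
proof
  fix c :: "nat set \<Rightarrow> 'k" assume c: "c \<in> chains V E i"
  let ?F = "clique_faces V E i"
  have "c = (\<Sum>\<sigma>\<in>?F. chain_scale (c \<sigma>) (unit_chain \<sigma>))"
    unfolding fun_eq_iff sum_fun_apply using c finite_clique_faces[OF assms]
    by (auto simp: unit_chain_def chains_def if_distrib cong: if_cong)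
  also have "\<dots> \<in> chain_space.span (unit_chain ` ?F)"
    by (intro chain_space.span_sum chain_space.span_scale chain_space.span_base) auto
  finally show "c \<in> chain_space.span (unit_chain ` ?F)" .
qed

lemma inj_unit_chain: "inj (unit_chain :: _ \<Rightarrow> _ \<Rightarrow> 'k::field)"
  by (rule injI) (simp add: unit_chain_def fun_eq_iff, metis one_neq_zero)

lemma independent_unit_chains:
  assumes "finite A"
  shows "chain_space.independent ((unit_chain :: _ \<Rightarrow> _ \<Rightarrow> 'k::field) ` A)"
proof (rule chain_space.independent_if_scalars_zero)
  show "finite ((unit_chain :: _ \<Rightarrow> _ \<Rightarrow> 'k) ` A)" using assms by simp
  fix g :: "(nat set \<Rightarrow> 'k) \<Rightarrow> 'k" and x :: "nat set \<Rightarrow> 'k"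
  assume sum0: "(\<Sum>x\<in>unit_chain ` A. chain_scale (g x) x) = 0" and x: "x \<in> unit_chain ` A"
  then obtain \<sigma> where \<sigma>: "x = unit_chain \<sigma>" by blast
  have "(\<Sum>y\<in>unit_chain ` A. g y * y \<sigma>) = (\<Sum>y\<in>{x}. g y * y \<sigma>)"
    using assms x \<sigma>
    by (intro sum.mono_neutral_right) (auto simp: unit_chain_apply inj_eq[OF inj_unit_chain])
  then show "g x = 0"
    using fun_cong[OF sum0, of \<sigma>] \<sigma> by (simp add: sum_fun_apply unit_chain_apply)
qed

lemma dim_chains:
  assumes "finite V"
  shows "chain_space.dim (chains V E i :: (nat set \<Rightarrow> 'k::field) set) = card (clique_faces V E i)"
proof -
  let ?U = "(unit_chain :: _ \<Rightarrow> _ \<Rightarrow> 'k) ` clique_faces V E i"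
  have "?U \<subseteq> chains V E i" by (auto simp: unit_chain_def chains_def)
  moreover have "chains V E i \<subseteq> chain_space.span ?U"
    by (rule chains_subset_span_unit_chains[OF assms])
  ultimately have "card ?U = chain_space.dim (chains V E i :: (nat set \<Rightarrow> 'k) set)"
    using chain_space.basis_card_eq_dim independent_unit_chains[OF finite_clique_faces[OF assms]]
    by metis
  moreover have "card ?U = card (clique_faces V E i)"
    by (rule card_image[OF inj_on_subset[OF inj_unit_chain subset_UNIV]])
  ultimately show ?thesis by simp
qed

lemma linear_boundary:
  "Vector_Spaces.linear chain_scale chain_scale (boundary V E i :: (nat set \<Rightarrow> 'k::field) \<Rightarrow> _)"
  unfolding Vector_Spaces.linear_iff
proof (intro conjI allI)
  show "vector_space (chain_scale :: 'k \<Rightarrow> _)" by unfold_locales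
  then show "vector_space (chain_scale :: 'k \<Rightarrow> _)" .
  fix x y :: "nat set \<Rightarrow> 'k" and a :: 'k
  show "boundary V E i (x + y) = boundary V E i x + boundary V E i y"
    by (auto simp: boundary_def fun_eq_iff sum.distrib ring_distribs)
  show "boundary V E i (chain_scale a x) = chain_scale a (boundary V E i x)"
    by (auto simp: boundary_def fun_eq_iff sum_distrib_left ac_simps)
qed

lemma boundary_in_chains: "boundary V E i c \<in> chains V E (i - 1)"
  by (auto simp: boundary_def chains_def)

lemma cycles_subset_chains: "cycles K V E i \<subseteq> chains V E i"
  by (auto simp: cycles_def)

lemma boundaries_subset_chains: "boundaries K V E i \<subseteq> chains V E i"
  using boundary_in_chains[of V E "i + 1"] by (auto simp: boundaries_def)

lemma subspace_cycles: "chain_space.subspace (cycles K V E i)"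
proof -
  interpret d: Vector_Spaces.linear chain_scale chain_scale
      "boundary V E i :: (nat set \<Rightarrow> 'k::field) \<Rightarrow> _"
    by (rule linear_boundary)
  have "cycles K V E i = chains V E i \<inter> {c. boundary V E i c = 0}" by (auto simp: cycles_def)
  then show ?thesis
    using chain_space.subspace_inter[OF subspace_chains d.subspace_kernel] by simp
qed

lemma subspace_boundaries: "chain_space.subspace (boundaries K V E i)"
proof -
  interpret d: Vector_Spaces.linear chain_scale chain_scale
      "boundary V E (i + 1) :: (nat set \<Rightarrow> 'k::field) \<Rightarrow> _"
    by (rule linear_boundary)
  show ?thesis unfolding boundaries_def by (rule d.subspace_image[OF subspace_chains])
qed

lemma dim_mono_chains:
  assumes "finite V" "S \<subseteq> T" "T \<subseteq> (chains V E i :: (nat set \<Rightarrow> 'k::field) set)"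
  shows "chain_space.dim S \<le> chain_space.dim T"
  using chain_space.dim_mono_finite_span[OF assms(2)] assms(3)
    chains_subset_span_unit_chains[OF assms(1)] finite_clique_faces[OF assms(1)]
  by blast

lemma reduced_betti_le_card_clique_faces:
  assumes "finite V"
  shows "reduced_betti (K :: 'k::field itself) V E i \<le> card (clique_faces V E i)"
proof -
  have "chain_space.dim (cycles K V E i) \<le> chain_space.dim (chains V E i :: (nat set \<Rightarrow> 'k) set)"
    by (rule dim_mono_chains[OF assms cycles_subset_chains order_refl])
  then show ?thesis
    unfolding reduced_betti_eq_dim_cycles_boundaries dim_chains[OF assms] by linarith
qed

lemma reduced_betti_eq_0:
  assumes "finite V" "\<not> (-1 \<le> i \<and> i < int (card V))"
  shows "reduced_betti K V E i = 0"
  using reduced_betti_le_card_clique_faces[OF assms(1), of K E i] clique_faces_eq_empty[OF assms]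
  by simp

text \<open>Without faces of dimension \<open>i + 1\<close> there are no \<open>i\<close>-boundaries, and the \<open>i\<close>-cycles form
  the kernel of a map into the \<open>(i - 1)\<close>-chains.\<close>
lemma card_clique_faces_diff_le_reduced_betti:
  assumes "finite V" "clique_faces V E (i + 1) = {}"
  shows "int (card (clique_faces V E i)) - int (card (clique_faces V E (i - 1)))
           \<le> int (reduced_betti (K :: 'k::field itself) V E i)"
proof -
  interpret d: Vector_Spaces.linear chain_scale chain_scale
      "boundary V E (i + 1) :: (nat set \<Rightarrow> 'k) \<Rightarrow> _"
    by (rule linear_boundary)
  have "chains V E (i + 1) = ({0} :: (nat set \<Rightarrow> 'k) set)"
    using assms(2) by (auto simp: chains_def)
  then have "boundaries K V E i = {0}" by (simp add: boundaries_def)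
  then have no_boundaries: "chain_space.dim (boundaries K V E i) = 0"
    by (simp add: chain_space.dim_eq_0_if_subset_zero)
  have "chain_space.dim (chains V E i :: (nat set \<Rightarrow> 'k) set)
      = chain_space.dim (cycles K V E i)
        + chain_space.dim (boundary V E i ` (chains V E i :: (nat set \<Rightarrow> 'k) set))"
    using chain_space.rank_nullity_finite_span[OF linear_boundary subspace_chains
        chains_subset_span_unit_chains[OF assms(1)]
        finite_imageI[OF finite_clique_faces[OF assms(1)]]]
    by (simp add: cycles_def)
  moreover have "chain_space.dim (boundary V E i ` (chains V E i :: (nat set \<Rightarrow> 'k) set))
      \<le> chain_space.dim (chains V E (i - 1) :: (nat set \<Rightarrow> 'k) set)"
    using dim_mono_chains[OF assms(1) _ order_refl] boundary_in_chains by (metis image_subsetI)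
  ultimately show ?thesis
    unfolding reduced_betti_eq_dim_cycles_boundaries dim_chains[OF assms(1)] using no_boundaries
    by linarith
qed

lemma total_betti_eq_sum:
  assumes "finite V" "N \<ge> int (card V) - 1"
  shows "total_betti K V E = (\<Sum>i\<in>{-1..N}. reduced_betti K V E i)"
proof -
  have "(\<Sum>i\<in>{-1..M}. reduced_betti K V E i) = (\<Sum>i\<in>{-1..int (card V) - 1}. reduced_betti K V E i)"
    if "M \<ge> int (card V) - 1" for M
    using that by (intro sum.mono_neutral_right) (auto intro!: reduced_betti_eq_0[OF assms(1)])
  from this[of "int (card V)"] this[OF assms(2)] show ?thesis
    by (simp add: total_betti_def)
qed

lemma reduced_betti_le_total_betti:
  assumes "finite V" "-1 \<le> i" "i \<le> int (card V)"
  shows "reduced_betti K V E i \<le> total_betti K V E"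
  unfolding total_betti_def using assms by (intro member_le_sum) simp_all

lemma total_betti_eq_sum_shifted:
  assumes "finite V" "M \<ge> int (card V)"
  shows "total_betti K V E = (\<Sum>i\<in>{-1..M}. reduced_betti K V E (i - 1))"
proof -
  have "(\<Sum>i\<in>{-1..M}. reduced_betti K V E (i - 1)) = (\<Sum>j\<in>{-2..M - 1}. reduced_betti K V E j)"
    by (rule sum.reindex_bij_witness[of _ "\<lambda>j. j + 1" "\<lambda>i. i - 1"]) auto
  also have "\<dots> = (\<Sum>j\<in>{-1..M - 1}. reduced_betti K V E j)"
    by (intro sum.mono_neutral_right) (auto intro!: reduced_betti_eq_0[OF assms(1)])
  finally show ?thesis using total_betti_eq_sum[OF assms(1), of "M - 1"] assms(2) by simp
qed

section \<open>Deleting the top vertex\<close>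

definition link_part :: "nat \<Rightarrow> (nat set \<Rightarrow> 'k::field) \<Rightarrow> nat set \<Rightarrow> 'k" where
  "link_part v c = (\<lambda>\<tau>. if v \<notin> \<tau> then c (insert v \<tau>) else 0)"

definition off_part :: "nat \<Rightarrow> (nat set \<Rightarrow> 'k::field) \<Rightarrow> nat set \<Rightarrow> 'k" where
  "off_part v c = (\<lambda>\<sigma>. if v \<in> \<sigma> then 0 else c \<sigma>)"

definition cone_chain :: "nat \<Rightarrow> (nat set \<Rightarrow> 'k::field) \<Rightarrow> nat set \<Rightarrow> 'k" where
  "cone_chain v e = (\<lambda>\<sigma>. if v \<in> \<sigma> then e (\<sigma> - {v}) else 0)"

lemma linear_link_part:
  "Vector_Spaces.linear chain_scale chain_scale (link_part v :: (nat set \<Rightarrow> 'k::field) \<Rightarrow> _)"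
  unfolding Vector_Spaces.linear_iff
proof (intro conjI allI)
  show "vector_space (chain_scale :: 'k \<Rightarrow> _)" by unfold_locales
  then show "vector_space (chain_scale :: 'k \<Rightarrow> _)" .
  fix x y :: "nat set \<Rightarrow> 'k" and a :: 'k
  show "link_part v (x + y) = link_part v x + link_part v y"
    by (auto simp: link_part_def fun_eq_iff)
  show "link_part v (chain_scale a x) = chain_scale a (link_part v x)"
    by (auto simp: link_part_def fun_eq_iff)
qed

locale top_vertex =
  fixes V :: "nat set" and E :: "nat set set" and v :: nat
  assumes finite_V: "finite V" and top_in_V: "v \<in> V" and top_max: "\<And>u. u \<in> V \<Longrightarrow> u \<le> v"
begin

abbreviation "rest \<equiv> V - {v}"
abbreviation "link \<equiv> {u \<in> V. u \<noteq> v \<and> {u, v} \<in> E}"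

lemma insert_top_clique_faces_iff:
  assumes "v \<notin> \<tau>"
  shows "insert v \<tau> \<in> clique_faces V E i \<longleftrightarrow> \<tau> \<in> clique_faces link E (i - 1)"
proof (cases "finite \<tau>")
  case True
  have c: "card (insert v \<tau>) = card \<tau> + 1" using True assms by simp
  show ?thesis
    unfolding clique_faces_def is_clique_def using True assms c top_in_V
    by (auto simp: insert_commute)
next
  case False
  then show ?thesis by (auto simp: clique_faces_def)
qed

lemma clique_faces_link_subset_rest: "clique_faces link E i \<subseteq> clique_faces rest E i"
  by (auto simp: clique_faces_def is_clique_def)

lemma clique_faces_rest_subset: "clique_faces rest E i \<subseteq> clique_faces V E i"
  by (auto simp: clique_faces_def is_clique_def)

lemma clique_faces_rest_iff: "v \<notin> \<sigma> \<Longrightarrow> \<sigma> \<in> clique_faces V E i \<longleftrightarrow> \<sigma> \<in> clique_faces rest E i"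
  by (auto simp: clique_faces_def is_clique_def)

lemma top_notin_link_face: "\<sigma> \<in> clique_faces link E i \<Longrightarrow> v \<notin> \<sigma>"
  by (auto simp: clique_faces_def is_clique_def)

lemma top_notin_rest_face: "\<sigma> \<in> clique_faces rest E i \<Longrightarrow> v \<notin> \<sigma>"
  by (auto simp: clique_faces_def is_clique_def)

lemma boundary_index_insert_top:
  assumes "v \<notin> \<tau>"
  shows "{x \<in> V - insert v \<tau>. insert x (insert v \<tau>) \<in> clique_faces V E i}
    = {x \<in> link - \<tau>. insert x \<tau> \<in> clique_faces link E (i - 1)}"
proof (intro set_eqI iffI)
  fix x assume x: "x \<in> {x \<in> V - insert v \<tau>. insert x (insert v \<tau>) \<in> clique_faces V E i}"
  then have "v \<notin> insert x \<tau>" "insert v (insert x \<tau>) \<in> clique_faces V E i"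
    using assms by (auto simp: insert_commute)
  then have "insert x \<tau> \<in> clique_faces link E (i - 1)"
    using insert_top_clique_faces_iff by blast
  moreover from this have "x \<in> link" using clique_faces_subset_Pow by blast
  ultimately show "x \<in> {x \<in> link - \<tau>. insert x \<tau> \<in> clique_faces link E (i - 1)}"
    using x by blast
next
  fix x assume x: "x \<in> {x \<in> link - \<tau>. insert x \<tau> \<in> clique_faces link E (i - 1)}"
  then have "insert v (insert x \<tau>) \<in> clique_faces V E i"
    using assms insert_top_clique_faces_iff[of "insert x \<tau>"] by auto
  then show "x \<in> {x \<in> V - insert v \<tau>. insert x (insert v \<tau>) \<in> clique_faces V E i}"
    using x by (auto simp: insert_commute)
qed

lemma link_part_boundary:
  "link_part v (boundary V E i c) = boundary link E (i - 1) (link_part v c)"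
proof
  fix \<tau>
  show "link_part v (boundary V E i c) \<tau> = boundary link E (i - 1) (link_part v c) \<tau>"
  proof (cases "v \<notin> \<tau> \<and> insert v \<tau> \<in> clique_faces V E (i - 1)")
    case False
    then have "\<tau> \<notin> clique_faces link E (i - 1 - 1)"
      using insert_top_clique_faces_iff top_notin_link_face by blast
    then show ?thesis using False by (auto simp: link_part_def boundary_def)
  next
    case True
    then have face: "\<tau> \<in> clique_faces link E (i - 1 - 1)"
      using insert_top_clique_faces_iff by blast
    have "link_part v (boundary V E i c) \<tau> = boundary V E i c (insert v \<tau>)"
      using True by (simp add: link_part_def)
    also have "\<dots> = (\<Sum>x\<in>{x \<in> V - insert v \<tau>. insert x (insert v \<tau>) \<in> clique_faces V E i}.
        (-1) ^ card {y \<in> insert v \<tau>. y < x} * c (insert x (insert v \<tau>)))"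
      using True unfolding boundary_def by (simp only: if_True)
    also have "\<dots> = (\<Sum>x\<in>{x \<in> link - \<tau>. insert x \<tau> \<in> clique_faces link E (i - 1)}.
        (-1) ^ card {y \<in> \<tau>. y < x} * link_part v c (insert x \<tau>))"
      unfolding boundary_index_insert_top[OF conjunct1[OF True]]
    proof (rule sum.cong[OF refl])
      fix x assume "x \<in> {x \<in> link - \<tau>. insert x \<tau> \<in> clique_faces link E (i - 1)}"
      then have "x \<in> V" "x \<noteq> v" by auto
      then have "{y \<in> insert v \<tau>. y < x} = {y \<in> \<tau>. y < x}" using top_max[of x] by auto
      then show "(-1) ^ card {y \<in> insert v \<tau>. y < x} * c (insert x (insert v \<tau>))
          = (-1) ^ card {y \<in> \<tau>. y < x} * link_part v c (insert x \<tau>)"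
        using True \<open>x \<noteq> v\<close> by (simp add: link_part_def insert_commute)
    qed
    also have "\<dots> = boundary link E (i - 1) (link_part v c) \<tau>"
      using face unfolding boundary_def by (simp only: if_True)
    finally show ?thesis .
  qed
qed

lemma link_part_in_chains: "c \<in> chains V E i \<Longrightarrow> link_part v c \<in> chains link E (i - 1)"
  unfolding chains_def link_part_def using insert_top_clique_faces_iff top_notin_link_face
  by fastforce

lemma cone_chain_in_chains: "e \<in> chains link E (i - 1) \<Longrightarrow> cone_chain v e \<in> chains V E i"
proof -
  assume e: "e \<in> chains link E (i - 1)"
  show "cone_chain v e \<in> chains V E i" unfolding chains_def
  proof (intro CollectI allI impI)
    fix \<sigma> assume s: "\<sigma> \<notin> clique_faces V E i"
    show "cone_chain v e \<sigma> = 0"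
    proof (cases "v \<in> \<sigma>")
      case True
      then have "insert v (\<sigma> - {v}) = \<sigma>" by auto
      then have "\<sigma> - {v} \<notin> clique_faces link E (i - 1)"
        using insert_top_clique_faces_iff[of "\<sigma> - {v}" i] s by simp
      then show ?thesis using e True by (simp add: cone_chain_def chains_def)
    qed (simp add: cone_chain_def)
  qed
qed

lemma link_part_cone_chain:
  assumes e: "e \<in> chains link E j"
  shows "link_part v (cone_chain v e) = e"
proof
  fix \<tau>
  show "link_part v (cone_chain v e) \<tau> = e \<tau>"
  proof (cases "v \<in> \<tau>")
    case True
    then have "\<tau> \<notin> clique_faces link E j" using top_notin_link_face by blast
    then show ?thesis using e True by (simp add: link_part_def chains_def)
  next
    case False
    then have "insert v \<tau> - {v} = \<tau>" by auto
    then show ?thesis using False by (simp add: link_part_def cone_chain_def)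
  qed
qed

lemma link_part_image_chains: "link_part v ` chains V E i = chains link E (i - 1)"
proof
  show "link_part v ` chains V E i \<subseteq> chains link E (i - 1)" using link_part_in_chains by blast
  show "chains link E (i - 1) \<subseteq> link_part v ` chains V E i"
  proof
    fix e assume e: "e \<in> chains link E (i - 1)"
    then have "link_part v (cone_chain v e) = e" by (rule link_part_cone_chain)
    then show "e \<in> link_part v ` chains V E i" using cone_chain_in_chains[OF e] by (metis imageI)
  qed
qed

lemma boundary_index_remove_top:
  assumes "v \<notin> \<tau>"
  shows "{x \<in> V - \<tau>. insert x \<tau> \<in> clique_faces V E i} - {v}
    = {x \<in> rest - \<tau>. insert x \<tau> \<in> clique_faces rest E i}"
  using clique_faces_rest_iff[of "insert _ \<tau>" i] clique_faces_rest_subset assms by auto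

text \<open>Since \<open>v\<close> is the largest vertex, its coefficient in the boundary of \<open>insert v \<tau>\<close> carries
  the sign \<open>(-1) ^ card \<tau>\<close>.\<close>
lemma boundary_split_top:
  assumes nv: "v \<notin> \<tau>"
  shows "boundary V E i c \<tau> = boundary rest E i (off_part v c) \<tau> +
     (if \<tau> \<in> clique_faces link E (i - 1) then (-1) ^ card \<tau> * c (insert v \<tau>) else 0)"
proof (cases "\<tau> \<in> clique_faces V E (i - 1)")
  case False
  then have "\<tau> \<notin> clique_faces rest E (i - 1)" "\<tau> \<notin> clique_faces link E (i - 1)"
    using clique_faces_rest_subset clique_faces_link_subset_rest by blast+
  then show ?thesis using False by (simp add: boundary_def)
next
  case True
  let ?S = "{x \<in> V - \<tau>. insert x \<tau> \<in> clique_faces V E i}"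
  let ?f = "\<lambda>x. (-1) ^ card {y \<in> \<tau>. y < x} * c (insert x \<tau>)"
  have "\<tau> \<in> clique_faces rest E (i - 1)" using True clique_faces_rest_iff[OF nv] by simp
  then have rest: "boundary rest E i (off_part v c) \<tau> = sum ?f (?S - {v})"
    unfolding boundary_index_remove_top[OF nv] boundary_def
    by (auto simp: off_part_def nv intro!: sum.cong)
  have "\<tau> \<subseteq> V" using True clique_faces_subset_Pow by blast
  then have "{y \<in> \<tau>. y < v} = \<tau>" using top_max nv by (force simp: order.order_iff_strict)
  moreover have "v \<in> ?S \<longleftrightarrow> \<tau> \<in> clique_faces link E (i - 1)"
    using insert_top_clique_faces_iff[OF nv, of i] nv top_in_V by simp
  moreover have "boundary V E i c \<tau> = sum ?f ?S" using True by (simp add: boundary_def)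
  ultimately show ?thesis
    using rest sum.remove[of ?S v ?f] finite_V by (cases "v \<in> ?S") (simp_all add: add.commute)
qed

lemma chains_rest_subset: "chains rest E i \<subseteq> chains V E i"
  unfolding chains_def using clique_faces_rest_subset by blast

lemma rest_chain_vanishes: "c \<in> chains rest E i \<Longrightarrow> v \<in> \<sigma> \<Longrightarrow> c \<sigma> = 0"
  unfolding chains_def using top_notin_rest_face by blast

lemma boundary_rest_chain:
  assumes c: "c \<in> chains rest E i"
  shows "boundary V E i c = boundary rest E i c"
proof
  fix \<tau>
  show "boundary V E i c \<tau> = boundary rest E i c \<tau>"
  proof (cases "v \<in> \<tau>")
    case True
    then have "\<tau> \<notin> clique_faces rest E (i - 1)" using top_notin_rest_face by blast
    moreover have "boundary V E i c \<tau> = 0"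
      using rest_chain_vanishes[OF c] True by (simp add: boundary_def)
    ultimately show ?thesis by (simp add: boundary_def)
  next
    case False
    have "off_part v c = c" using rest_chain_vanishes[OF c] by (auto simp: off_part_def fun_eq_iff)
    moreover have "c (insert v \<tau>) = 0" using rest_chain_vanishes[OF c] by simp
    ultimately show ?thesis using boundary_split_top[OF False, of i c] by simp
  qed
qed

lemma link_part_eq_0_iff:
  assumes "c \<in> chains V E i"
  shows "link_part v c = 0 \<longleftrightarrow> c \<in> chains rest E i"
proof
  assume h: "link_part v c = 0"
  show "c \<in> chains rest E i" unfolding chains_def
  proof (intro CollectI allI impI)
    fix \<sigma> assume s: "\<sigma> \<notin> clique_faces rest E i"
    show "c \<sigma> = 0"
    proof (cases "v \<in> \<sigma>")
      case True
      then have "insert v (\<sigma> - {v}) = \<sigma>" by auto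
      then have "c \<sigma> = link_part v c (\<sigma> - {v})" by (simp add: link_part_def)
      then show ?thesis using h by simp
    next
      case False
      then have "\<sigma> \<notin> clique_faces V E i" using s clique_faces_rest_iff by blast
      then show ?thesis using assms by (simp add: chains_def)
    qed
  qed
next
  assume c: "c \<in> chains rest E i"
  show "link_part v c = 0"
  proof
    fix \<tau>
    have "c (insert v \<tau>) = 0" by (rule rest_chain_vanishes[OF c]) simp
    then show "link_part v c \<tau> = 0 \<tau>" by (simp add: link_part_def)
  qed
qed


lemma cycles_inter_kernel_link_part:
  "{z \<in> cycles K V E i. link_part v z = 0} = cycles K rest E i"
proof (intro set_eqI iffI)
  fix z assume z: "z \<in> {z \<in> cycles K V E i. link_part v z = 0}"
  then have zc: "z \<in> chains rest E i" using link_part_eq_0_iff by (auto simp: cycles_def)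
  then show "z \<in> cycles K rest E i" using z boundary_rest_chain[OF zc] by (auto simp: cycles_def)
next
  fix z assume z: "z \<in> cycles K rest E i"
  then have zc: "z \<in> chains rest E i" by (simp add: cycles_def)
  then show "z \<in> {z \<in> cycles K V E i. link_part v z = 0}"
    using z boundary_rest_chain[OF zc] link_part_eq_0_iff chains_rest_subset
    by (auto simp: cycles_def)
qed

lemma link_part_cycles: "link_part v ` cycles K V E i \<subseteq> cycles K link E (i - 1)"
proof
  fix w assume "w \<in> link_part v ` cycles K V E i"
  then obtain z where z: "z \<in> chains V E i" "boundary V E i z = 0" "w = link_part v z"
    by (auto simp: cycles_def)
  have "boundary link E (i - 1) w = link_part v (boundary V E i z)"
    by (simp add: z(3) link_part_boundary)
  then have "boundary link E (i - 1) w = 0"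
    using z(2) by (simp add: link_part_def fun_eq_iff)
  then show "w \<in> cycles K link E (i - 1)"
    using link_part_in_chains[OF z(1)] z(3) by (simp add: cycles_def)
qed

lemma link_part_boundaries: "link_part v ` boundaries K V E i = boundaries K link E (i - 1)"
proof -
  have "link_part v ` boundaries K V E i = boundary link E i ` link_part v ` chains V E (i + 1)"
    unfolding boundaries_def image_image by (simp add: link_part_boundary[of "i + 1"])
  also have "\<dots> = boundaries K link E (i - 1)"
    by (simp add: boundaries_def link_part_image_chains[of "i + 1", simplified])
  finally show ?thesis .
qed

lemma boundaries_rest_subset_kernel_link_part:
  "boundaries K rest E i \<subseteq> {b \<in> boundaries K V E i. link_part v b = 0}"
proof
  fix b assume "b \<in> boundaries K rest E i"
  then obtain c where c: "c \<in> chains rest E (i + 1)" "b = boundary rest E (i + 1) c"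
    by (auto simp: boundaries_def)
  then have "b \<in> boundaries K V E i"
    using boundary_rest_chain[OF c(1)] chains_rest_subset
    by (auto simp: boundaries_def intro!: rev_image_eqI)
  moreover have "b \<in> chains rest E i" using c boundary_in_chains[of rest E "i + 1"] by simp
  ultimately show "b \<in> {b \<in> boundaries K V E i. link_part v b = 0}"
    using link_part_eq_0_iff chains_rest_subset boundaries_subset_chains by blast
qed

text \<open>Rank--nullity for \<open>link_part\<close> on the cycles and on the boundaries of \<open>G\<close>: its kernel on
  cycles is the cycles of \<open>G - v\<close>, and it maps cycles into cycles and boundaries onto boundaries
  of the link.\<close>
lemma reduced_betti_le_rest_link:
  "reduced_betti (K :: 'k::field itself) V E i
    \<le> reduced_betti K rest E i + reduced_betti K link E (i - 1)"
proof -
  have finite_link: "finite link" using finite_V by simp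
  have rank_nullity: "chain_space.dim S = chain_space.dim {x \<in> S. link_part v x = 0}
      + chain_space.dim (link_part v ` S)"
    if "chain_space.subspace S" "S \<subseteq> (chains V E i :: (nat set \<Rightarrow> 'k) set)" for S
    using chain_space.rank_nullity_finite_span[OF linear_link_part that(1)] that(2)
      chains_subset_span_unit_chains[OF finite_V] finite_clique_faces[OF finite_V]
    by blast
  have "chain_space.dim (link_part v ` cycles K V E i) \<le> chain_space.dim (cycles K link E (i - 1))"
    by (rule dim_mono_chains[OF finite_link link_part_cycles cycles_subset_chains])
  moreover have "chain_space.dim (boundaries K rest E i)
      \<le> chain_space.dim {b \<in> boundaries K V E i. link_part v b = 0}"
    by (rule dim_mono_chains[OF finite_V boundaries_rest_subset_kernel_link_part])
      (use boundaries_subset_chains in blast)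
  ultimately show ?thesis
    unfolding reduced_betti_eq_dim_cycles_boundaries
    using rank_nullity[OF subspace_cycles cycles_subset_chains]
      rank_nullity[OF subspace_boundaries boundaries_subset_chains]
    by (simp add: cycles_inter_kernel_link_part link_part_boundaries)
qed

lemma boundary_cone_chain_top:
  assumes a: "a \<in> chains link E i" and "v \<notin> \<tau>"
  shows "boundary V E (i + 1) (cone_chain v a) (insert v \<tau>) = boundary link E i a \<tau>"
proof -
  have "boundary V E (i + 1) (cone_chain v a) (insert v \<tau>)
      = link_part v (boundary V E (i + 1) (cone_chain v a)) \<tau>"
    using assms(2) by (simp add: link_part_def)
  also have "\<dots> = boundary link E i (link_part v (cone_chain v a)) \<tau>"
    by (simp add: link_part_boundary[of "i + 1"])
  finally show ?thesis using link_part_cone_chain[OF a] by simp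
qed

lemma boundary_cone_chain_off_top:
  assumes "v \<notin> \<sigma>"
  shows "boundary V E (i + 1) (cone_chain v a) \<sigma>
    = (if \<sigma> \<in> clique_faces link E i then (-1) ^ card \<sigma> * a \<sigma> else 0)"
proof -
  interpret d: Vector_Spaces.linear chain_scale chain_scale
      "boundary rest E (i + 1) :: (nat set \<Rightarrow> 'k::field) \<Rightarrow> _"
    by (rule linear_boundary)
  have "off_part v (cone_chain v a) = 0" by (auto simp: off_part_def cone_chain_def fun_eq_iff)
  then show ?thesis
    using boundary_split_top[OF assms, of "i + 1" "cone_chain v a"] assms
    by (simp add: cone_chain_def)
qed

context
  assumes cone: "\<And>u. u \<in> rest \<Longrightarrow> {u, v} \<in> E"
begin

lemma link_eq_rest: "link = rest"
  using cone by blast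

lemma off_part_in_chains_link: "z \<in> chains V E i \<Longrightarrow> off_part v z \<in> chains link E i"
  using clique_faces_rest_iff link_eq_rest by (auto simp: chains_def off_part_def)

lemma boundary_cone_off_part_top:
  assumes z: "z \<in> chains V E i" "boundary V E i z = 0" and "v \<notin> \<tau>"
  shows "(-1) ^ nat (i + 1) * boundary V E (i + 1) (cone_chain v (off_part v z)) (insert v \<tau>)
    = z (insert v \<tau>)"
proof (cases "\<tau> \<in> clique_faces link E (i - 1)")
  case True
  then have "int (card \<tau>) = i" by (simp add: clique_faces_def)
  then have "nat (i + 1) = Suc (card \<tau>)" by arith
  moreover have "(-1) ^ card \<tau> * z (insert v \<tau>) = - boundary rest E i (off_part v z) \<tau>"
    using boundary_split_top[OF \<open>v \<notin> \<tau>\<close>, of i z] z(2) True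
    by (simp add: eq_neg_iff_add_eq_0 add.commute)
  then have "z (insert v \<tau>) = (-1) ^ card \<tau> * (- boundary rest E i (off_part v z) \<tau>)"
    by (metis minus_one_mult_self mult.assoc mult_1)
  ultimately show ?thesis
    using boundary_cone_chain_top[OF off_part_in_chains_link[OF z(1)] \<open>v \<notin> \<tau>\<close>] link_eq_rest
    by simp
next
  case False
  then have "insert v \<tau> \<notin> clique_faces V E i"
    using insert_top_clique_faces_iff[OF \<open>v \<notin> \<tau>\<close>] by simp
  then show ?thesis
    using z(1) False boundary_cone_chain_top[OF off_part_in_chains_link[OF z(1)] \<open>v \<notin> \<tau>\<close>]
      link_eq_rest
    by (simp add: chains_def boundary_def)
qed

lemma boundary_cone_off_part_off_top:
  assumes z: "z \<in> chains V E i" and "v \<notin> \<sigma>"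
  shows "(-1) ^ nat (i + 1) * boundary V E (i + 1) (cone_chain v (off_part v z)) \<sigma> = z \<sigma>"
proof (cases "\<sigma> \<in> clique_faces link E i")
  case True
  then have "int (card \<sigma>) = i + 1" by (simp add: clique_faces_def)
  then have "nat (i + 1) = card \<sigma>" by arith
  then show ?thesis
    using True \<open>v \<notin> \<sigma>\<close> boundary_cone_chain_off_top[OF \<open>v \<notin> \<sigma>\<close>, of i "off_part v z"]
    by (simp add: off_part_def mult.assoc[symmetric])
next
  case False
  then have "\<sigma> \<notin> clique_faces V E i" using clique_faces_rest_iff[OF \<open>v \<notin> \<sigma>\<close>] link_eq_rest by simp
  then show ?thesis
    using z False boundary_cone_chain_off_top[OF \<open>v \<notin> \<sigma>\<close>, of i "off_part v z"]
    by (simp add: chains_def)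
qed

text \<open>A cone is acyclic: a cycle \<open>z\<close> is, up to sign, the boundary of the cone over its part
  avoiding the apex.\<close>
lemma cycles_subset_boundaries_cone: "cycles (K :: 'k::field itself) V E i \<subseteq> boundaries K V E i"
proof
  fix z :: "nat set \<Rightarrow> 'k" assume "z \<in> cycles K V E i"
  then have z: "z \<in> chains V E i" "boundary V E i z = 0" by (auto simp: cycles_def)
  interpret d: Vector_Spaces.linear chain_scale chain_scale
      "boundary V E (i + 1) :: (nat set \<Rightarrow> 'k) \<Rightarrow> _"
    by (rule linear_boundary)
  let ?w = "chain_scale ((-1) ^ nat (i + 1)) (cone_chain v (off_part v z))"
  have "boundary V E (i + 1) ?w \<sigma> = z \<sigma>" for \<sigma>
  proof (cases "v \<in> \<sigma>")
    case True
    then have "\<sigma> = insert v (\<sigma> - {v})" by blast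
    then show ?thesis
      using boundary_cone_off_part_top[OF z, of "\<sigma> - {v}"] by (simp add: d.scale)
  next
    case False
    then show ?thesis using boundary_cone_off_part_off_top[OF z(1) False] by (simp add: d.scale)
  qed
  moreover have "cone_chain v (off_part v z) \<in> chains V E (i + 1)"
    using cone_chain_in_chains[of "off_part v z" "i + 1"] off_part_in_chains_link[OF z(1)] by simp
  then have "?w \<in> chains V E (i + 1)"
    by (rule chain_space.subspace_scale[OF subspace_chains])
  ultimately show "z \<in> boundaries K V E i"
    unfolding boundaries_def by (metis fun_eq_iff imageI)
qed

lemma reduced_betti_cone_eq_0: "reduced_betti (K :: 'k::field itself) V E i = 0"
  using dim_mono_chains[OF finite_V cycles_subset_boundaries_cone boundaries_subset_chains]
  by (simp add: reduced_betti_eq_dim_cycles_boundaries)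

lemma total_betti_cone_eq_0: "total_betti (K :: 'k::field itself) V E = 0"
  unfolding total_betti_def by (intro sum.neutral ballI reduced_betti_cone_eq_0)

end

lemma total_betti_le_rest_link:
  "total_betti (K :: 'k::field itself) V E \<le> total_betti K rest E + total_betti K link E"
proof -
  have "card rest = card V - 1" "card link \<le> card V"
    using top_in_V finite_V by (auto intro: card_mono)
  then have "total_betti K rest E = (\<Sum>i\<in>{-1..int (card V)}. reduced_betti K rest E i)"
    "total_betti K link E = (\<Sum>i\<in>{-1..int (card V)}. reduced_betti K link E (i - 1))"
    using finite_V
    by (simp_all add: total_betti_eq_sum[of rest "int (card V)"]
        total_betti_eq_sum_shifted[of link "int (card V)"])
  then have "total_betti K rest E + total_betti K link E
      = (\<Sum>i\<in>{-1..int (card V)}. reduced_betti K rest E i + reduced_betti K link E (i - 1))"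
    by (simp add: sum.distrib)
  moreover have "total_betti K V E
      \<le> (\<Sum>i\<in>{-1..int (card V)}. reduced_betti K rest E i + reduced_betti K link E (i - 1))"
    unfolding total_betti_def by (rule sum_mono) (rule reduced_betti_le_rest_link)
  ultimately show ?thesis by simp
qed

end

section \<open>Induced copies of \<open>K_{i1,1,...,1}\<close> and the upper bound\<close>

abbreviation K_vertices :: "nat \<Rightarrow> nat \<Rightarrow> (nat \<times> nat) set" where
  "K_vertices i1 k \<equiv> cmp_vertices (i1 # replicate k 1)"

abbreviation K_edges :: "nat \<Rightarrow> nat \<Rightarrow> (nat \<times> nat) set set" where
  "K_edges i1 k \<equiv> cmp_edges (i1 # replicate k 1)"

abbreviation K_free :: "nat \<Rightarrow> nat \<Rightarrow> 'a set \<Rightarrow> 'a set set \<Rightarrow> bool" where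
  "K_free i1 k V E \<equiv> \<not> has_induced_copy (K_vertices i1 k) (K_edges i1 k) V E"

lemma mem_K_vertices:
  "(j, x) \<in> K_vertices i1 k \<longleftrightarrow> j \<le> k \<and> x < (if j = 0 then i1 else 1)"
  by (cases j) (auto simp: cmp_vertices_def)

text \<open>Both forms are needed since the simplifier rewrites \<open>replicate (Suc k) 1\<close>.\<close>
lemma mem_K_vertices_simps [simp]:
  "(j, x) \<in> cmp_vertices (i1 # replicate k (Suc 0)) \<longleftrightarrow> j \<le> k \<and> x < (if j = 0 then i1 else 1)"
  "(j, x) \<in> cmp_vertices (i1 # Suc 0 # replicate k (Suc 0))
    \<longleftrightarrow> j \<le> Suc k \<and> x < (if j = 0 then i1 else 1)"
  using mem_K_vertices[of j x i1 k] mem_K_vertices[of j x i1 "Suc k"] by simp_all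

lemma mem_cmp_edges_iff:
  assumes "x \<in> cmp_vertices ps" "y \<in> cmp_vertices ps" "x \<noteq> y"
  shows "{x, y} \<in> cmp_edges ps \<longleftrightarrow> fst x \<noteq> fst y"
proof
  assume "{x, y} \<in> cmp_edges ps"
  then obtain a b where "{x, y} = {a, b}" "fst a \<noteq> fst b" by (auto simp: cmp_edges_def)
  then show "fst x \<noteq> fst y" by (auto simp: doubleton_eq_iff)
next
  assume "fst x \<noteq> fst y"
  then show "{x, y} \<in> cmp_edges ps" unfolding cmp_edges_def using assms by blast
qed

lemma has_induced_copy_mono:
  "has_induced_copy VH EH V' E \<Longrightarrow> V' \<subseteq> V \<Longrightarrow> has_induced_copy VH EH V E"
  unfolding has_induced_copy_def by (meson order_trans)

lemma cmp_vertices_singleton_parts [simp]: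
  "cmp_vertices [Suc 0] = {(0, 0)}" "cmp_vertices [2] = {(0, 0), (0, 1)}"
  by (auto simp: cmp_vertices_def)

lemma has_induced_copy_vertex:
  assumes "v \<in> V"
  shows "has_induced_copy (K_vertices 1 0) (K_edges 1 0) V E"
  unfolding has_induced_copy_def using assms by auto

lemma has_induced_copy_non_edge:
  assumes "u \<in> V" "w \<in> V" "u \<noteq> w" "{u, w} \<notin> E"
  shows "has_induced_copy (K_vertices 2 0) (K_edges 2 0) V E"
  unfolding has_induced_copy_def
proof (intro exI[of _ "\<lambda>x. if x = (0, 0) then u else w"] conjI ballI impI)
  show "inj_on (\<lambda>x. if x = (0, 0) then u else w) (K_vertices 2 0)"
    using assms(3) by simp
  show "(\<lambda>x. if x = (0, 0) then u else w) ` K_vertices 2 0 \<subseteq> V"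
    using assms(1,2) by auto
next
  fix x y assume xy: "x \<in> K_vertices 2 0" "y \<in> K_vertices 2 0" "x \<noteq> y"
  then have "{x, y} \<notin> K_edges 2 0" by (auto simp: mem_cmp_edges_iff)
  moreover have "{if x = (0, 0) then u else w, if y = (0, 0) then u else w} = {u, w}"
    using xy by auto
  ultimately show "{x, y} \<in> K_edges 2 0 \<longleftrightarrow>
      {if x = (0, 0) then u else w, if y = (0, 0) then u else w} \<in> E"
    using assms(4) by simp
qed

lemma K_vertices_Suc: "K_vertices i1 (Suc k) = insert (Suc k, 0) (K_vertices i1 k)"
  by auto

lemma K_edges_Suc_iff:
  assumes "u \<in> K_vertices i1 k" "w \<in> K_vertices i1 k" "u \<noteq> w"
  shows "{u, w} \<in> K_edges i1 (Suc k) \<longleftrightarrow> {u, w} \<in> K_edges i1 k"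
proof -
  have "u \<in> K_vertices i1 (Suc k)" "w \<in> K_vertices i1 (Suc k)"
    using assms(1,2) unfolding K_vertices_Suc by blast+
  then show ?thesis using mem_cmp_edges_iff[of u _ w] assms by simp
qed

lemma K_edges_Suc_new_part:
  assumes "u \<in> K_vertices i1 k"
  shows "{u, (Suc k, 0)} \<in> K_edges i1 (Suc k)"
proof -
  have "fst u \<noteq> Suc k" using assms by (cases u) simp
  moreover have "u \<in> K_vertices i1 (Suc k)" "(Suc k, 0) \<in> K_vertices i1 (Suc k)"
    using assms unfolding K_vertices_Suc by blast+
  ultimately show ?thesis using mem_cmp_edges_iff[of u "i1 # replicate (Suc k) 1" "(Suc k, 0)"]
    by fastforce
qed

context top_vertex
begin

text \<open>The apex is adjacent to the whole link, so it can play the role of a new singleton part.\<close>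
lemma has_induced_copy_insert_apex:
  assumes "has_induced_copy (K_vertices i1 k) (K_edges i1 k) link E"
  shows "has_induced_copy (K_vertices i1 (Suc k)) (K_edges i1 (Suc k)) V E"
proof -
  let ?A = "K_vertices i1 k" and ?a = "(Suc k, 0)"
  from assms[unfolded has_induced_copy_def] obtain f where f: "inj_on f ?A" "f ` ?A \<subseteq> link"
    and f_edges: "\<forall>u\<in>?A. \<forall>w\<in>?A. u \<noteq> w \<longrightarrow> ({u, w} \<in> K_edges i1 k \<longleftrightarrow> {f u, f w} \<in> E)"
    by (elim exE conjE)
  define g where "g = f(?a := v)"
  have new: "?a \<notin> ?A" by simp
  then have g_A: "g u = f u" if "u \<in> ?A" for u using that by (auto simp: g_def)
  then have "inj_on g ?A" "g ` ?A = f ` ?A" using f(1) inj_on_cong by (metis, auto)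
  moreover have "g ?a \<notin> g ` ?A" using f(2) g_A by (auto simp: g_def)
  ultimately have inj: "inj_on g (K_vertices i1 (Suc k))" and image: "g ` K_vertices i1 (Suc k) \<subseteq> V"
    unfolding K_vertices_Suc using new f(2) top_in_V by (auto simp: g_def)
  have "{u, w} \<in> K_edges i1 (Suc k) \<longleftrightarrow> {g u, g w} \<in> E"
    if uw: "u \<in> K_vertices i1 (Suc k)" "w \<in> K_vertices i1 (Suc k)" "u \<noteq> w" for u w
  proof -
    have apex_edge: "{g u, g ?a} \<in> E" if "u \<in> ?A" for u
      using f(2) that g_A by (auto simp: g_def)
    consider "u \<in> ?A" "w \<in> ?A" | "u \<in> ?A" "w = ?a" | "u = ?a" "w \<in> ?A"
      using uw unfolding K_vertices_Suc by blast
    then show ?thesis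
    proof cases
      case 1
      then show ?thesis using K_edges_Suc_iff f_edges g_A uw(3) by simp
    next
      case 2
      then show ?thesis using K_edges_Suc_new_part apex_edge by simp
    next
      case 3
      then show ?thesis using K_edges_Suc_new_part apex_edge by (simp add: insert_commute)
    qed
  qed
  then show ?thesis unfolding has_induced_copy_def using inj image by (intro exI[of _ g]) simp
qed

end

lemma total_betti_empty: "total_betti (K :: 'k::field itself) {} E = 1"
proof -
  have faces: "clique_faces {} E (-1) = {{}}" "clique_faces {} E 0 = {}"
    "clique_faces {} E (-2) = {}"
    by (auto simp: clique_faces_def is_clique_def)
  have "total_betti K {} E = reduced_betti K {} E (-1)"
    using total_betti_eq_sum[of "{}" "-1" K E] by simp
  moreover have "reduced_betti K {} E (-1) \<le> 1"
    using reduced_betti_le_card_clique_faces[of "{}" K E "-1"] faces by simp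
  moreover have "1 \<le> reduced_betti K {} E (-1)"
    using card_clique_faces_diff_le_reduced_betti[of "{}" E "-1" K] faces by simp
  ultimately show ?thesis by simp
qed

text \<open>Deleting the top vertex \<open>v\<close> keeps \<open>G\<close> free of \<open>K_{i1,1^k}\<close> while the link of \<open>v\<close> is
  free of \<open>K_{i1,1^(k-1)}\<close>; the bound \<open>n^k + n^(k-1) \<le> (n+1)^k\<close> closes the induction.\<close>
lemma total_betti_le_if_K_free:
  assumes "1 \<le> i1" "i1 \<le> 2" "finite V" "K_free i1 k V E"
  shows "total_betti (K :: 'k::field itself) V E \<le> (card V + 1) ^ k"
  using assms(3,4)
proof (induction "card V" arbitrary: V k rule: less_induct)
  case less
  show ?case
  proof (cases "V = {}")
    case True
    then show ?thesis using total_betti_empty[of K] by simp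
  next
    case nonempty: False
    interpret top_vertex V E "Max V"
      using less(2) nonempty by unfold_locales simp_all
    show ?thesis
    proof (cases k)
      case 0
      then have "i1 \<noteq> 1" using has_induced_copy_vertex[OF top_in_V, of E] less(3) by auto
      then have "i1 = 2" using assms(1,2) by simp
      then have "{u, Max V} \<in> E" if "u \<in> rest" for u
        using has_induced_copy_non_edge[of u V "Max V" E] that top_in_V less(3) 0 by blast
      then show ?thesis using total_betti_cone_eq_0[where K = K] by simp
    next
      case (Suc k')
      have card_rest: "card rest + 1 = card V"
        by (metis Suc_eq_plus1 card.remove finite_V top_in_V)
      have card_link: "card link \<le> card rest"
        using finite_V by (intro card_mono) auto
      have "K_free i1 k rest E" using has_induced_copy_mono less(3) by blast
      then have "total_betti K rest E \<le> card V ^ k"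
        using less(1)[of rest k] finite_V card_rest by simp
      moreover have "K_free i1 k' link E" using has_induced_copy_insert_apex less(3) Suc by blast
      then have "total_betti K link E \<le> (card link + 1) ^ k'"
        using less(1)[of link k'] finite_V card_rest card_link by simp
      then have "total_betti K link E \<le> card V ^ k'"
        using power_mono[of "card link + 1" "card V" k'] card_rest card_link by linarith
      moreover have "card V ^ k + card V ^ k' = (card V + 1) * card V ^ k'"
        "(card V + 1) * (card V + 1) ^ k' = (card V + 1) ^ k"
        using Suc by simp_all
      moreover have "(card V + 1) * card V ^ k' \<le> (card V + 1) * (card V + 1) ^ k'"
        by (intro mult_left_mono power_mono) simp_all
      ultimately show ?thesis using total_betti_le_rest_link[of K] by linarith
    qed
  qed
qed

section \<open>Complete multipartite graphs and the lower bound\<close>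

text \<open>The complete \<open>k\<close>-partite graph with \<open>k\<close> parts of size \<open>s\<close>; vertex \<open>x\<close> lies in part \<open>x div s\<close>.\<close>
definition turan_vertices :: "nat \<Rightarrow> nat \<Rightarrow> nat set" where
  "turan_vertices k s = {..<k * s}"

definition turan_edges :: "nat \<Rightarrow> nat \<Rightarrow> nat set set" where
  "turan_edges k s = {{x, y} | x y. x < k * s \<and> y < k * s \<and> x div s \<noteq> y div s}"

lemma turan_edge_div_neq:
  assumes "{a, b} \<in> turan_edges k s"
  shows "a div s \<noteq> b div s"
proof -
  obtain x y where "{a, b} = {x, y}" "x div s \<noteq> y div s"
    using assms by (auto simp: turan_edges_def)
  then show ?thesis by (auto simp: doubleton_eq_iff)
qed

lemma turan_edgeI:
  "x < k * s \<Longrightarrow> y < k * s \<Longrightarrow> x div s \<noteq> y div s \<Longrightarrow> {x, y} \<in> turan_edges k s"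
  unfolding turan_edges_def by blast

lemma simple_graph_turan: "simple_graph (turan_vertices k s) (turan_edges k s)"
  unfolding simple_graph_def
proof (intro conjI ballI)
  show "finite (turan_vertices k s)" by (simp add: turan_vertices_def)
  fix e assume "e \<in> turan_edges k s"
  then obtain x y where "e = {x, y}" "x < k * s" "y < k * s" "x div s \<noteq> y div s"
    by (auto simp: turan_edges_def)
  then show "\<exists>u v. e = {u, v} \<and> u \<noteq> v \<and> u \<in> turan_vertices k s \<and> v \<in> turan_vertices k s"
    by (auto simp: turan_vertices_def)
qed

lemma card_clique_turan_le:
  assumes "is_clique (turan_vertices k s) (turan_edges k s) \<sigma>"
  shows "card \<sigma> \<le> k"
proof -
  have "inj_on (\<lambda>x. x div s) \<sigma>"
  proof (rule inj_onI, rule ccontr)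
    fix a b assume "a \<in> \<sigma>" "b \<in> \<sigma>" "a div s = b div s" "a \<noteq> b"
    then show False using assms turan_edge_div_neq[of a b k s] by (simp add: is_clique_def)
  qed
  moreover have "(\<lambda>x. x div s) ` \<sigma> \<subseteq> {..<k}"
  proof
    fix y assume "y \<in> (\<lambda>x. x div s) ` \<sigma>"
    then obtain x where "x \<in> \<sigma>" "y = x div s" by blast
    moreover have "x < k * s" using assms \<open>x \<in> \<sigma>\<close> by (auto simp: is_clique_def turan_vertices_def)
    ultimately show "y \<in> {..<k}" by (simp add: less_mult_imp_div_less)
  qed
  ultimately show ?thesis using card_inj_on_le[of "\<lambda>x. x div s" \<sigma> "{..<k}"] by simp
qed

lemma clique_faces_turan_top: "clique_faces (turan_vertices k s) (turan_edges k s) (int k) = {}"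
proof -
  have "int (card \<sigma>) \<noteq> int k + 1" if "is_clique (turan_vertices k s) (turan_edges k s) \<sigma>" for \<sigma>
    using card_clique_turan_le[OF that] by linarith
  then show ?thesis by (auto simp: clique_faces_def)
qed

text \<open>The first vertices of the \<open>k + 1\<close> parts of \<open>K_{i1,1^k}\<close> span a clique.\<close>
lemma K_free_turan:
  assumes "1 \<le> i1"
  shows "K_free i1 k (turan_vertices k s) (turan_edges k s)"
proof
  let ?A = "K_vertices i1 k"
  assume "has_induced_copy ?A (K_edges i1 k) (turan_vertices k s) (turan_edges k s)"
  from this[unfolded has_induced_copy_def] obtain f
    where f: "inj_on f ?A" "f ` ?A \<subseteq> turan_vertices k s"
      and f_edges: "\<forall>u\<in>?A. \<forall>w\<in>?A. u \<noteq> w \<longrightarrow>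
        ({u, w} \<in> K_edges i1 k \<longleftrightarrow> {f u, f w} \<in> turan_edges k s)"
    by (elim exE conjE)
  define T where "T = (\<lambda>j. (j, 0::nat)) ` {..k}"
  have TA: "T \<subseteq> ?A" using assms by (auto simp: T_def)
  have "is_clique (turan_vertices k s) (turan_edges k s) (f ` T)"
    unfolding is_clique_def
  proof (intro conjI ballI impI)
    show "f ` T \<subseteq> turan_vertices k s" using f(2) TA by blast
    fix a b assume "a \<in> f ` T" "b \<in> f ` T" "a \<noteq> b"
    then obtain j j' where j: "j \<le> k" "j' \<le> k" "j \<noteq> j'" "a = f (j, 0)" "b = f (j', 0)"
      by (auto simp: T_def)
    then have A: "(j, 0) \<in> ?A" "(j', 0) \<in> ?A" using assms by auto
    then have "{(j, 0), (j', 0)} \<in> K_edges i1 k" using mem_cmp_edges_iff j(3) by simp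
    then show "{a, b} \<in> turan_edges k s" using f_edges A j by simp
  qed
  moreover have "card (f ` T) = Suc k"
    using card_image[OF inj_on_subset[OF f(1) TA]] by (simp add: T_def card_image inj_on_def)
  ultimately show False using card_clique_turan_le by fastforce
qed

definition transversal :: "nat \<Rightarrow> nat list \<Rightarrow> nat set" where
  "transversal s xs = (\<lambda>j. j * s + xs ! j) ` {..<length xs}"

lemma transversal_vertex_div_mod:
  assumes "set xs \<subseteq> {..<s}" "j < length xs"
  shows "(j * s + xs ! j) div s = j" "(j * s + xs ! j) mod s = xs ! j"
proof -
  have "xs ! j < s" using assms by (auto simp: subset_iff)
  then show "(j * s + xs ! j) div s = j" "(j * s + xs ! j) mod s = xs ! j" by simp_all
qed

lemma transversal_in_clique_faces:
  assumes xs: "set xs \<subseteq> {..<s}" "length xs = k"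
  shows "transversal s xs \<in> clique_faces (turan_vertices k s) (turan_edges k s) (int k - 1)"
proof -
  note part = transversal_vertex_div_mod[OF xs(1)]
  have vertex: "j * s + xs ! j < k * s" if "j < k" for j
  proof -
    have "j * s + xs ! j < (j + 1) * s" using xs that by (auto simp: subset_iff)
    also have "\<dots> \<le> k * s" using that by (intro mult_right_mono) simp_all
    finally show ?thesis .
  qed
  have "inj_on (\<lambda>j. j * s + xs ! j) {..<k}"
  proof (rule inj_onI)
    fix j j' assume j: "j \<in> {..<k}" "j' \<in> {..<k}" and eq: "j * s + xs ! j = j' * s + xs ! j'"
    have "j = (j * s + xs ! j) div s" using part(1) j xs(2) by simp
    also have "\<dots> = (j' * s + xs ! j') div s" by (simp only: eq)
    also have "\<dots> = j'" using part(1) j xs(2) by simp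
    finally show "j = j'" .
  qed
  then have "card (transversal s xs) = k" by (simp add: transversal_def card_image xs(2))
  moreover have "is_clique (turan_vertices k s) (turan_edges k s) (transversal s xs)"
    unfolding is_clique_def
  proof (intro conjI ballI impI)
    show "transversal s xs \<subseteq> turan_vertices k s"
      using vertex xs(2) by (auto simp: transversal_def turan_vertices_def)
    fix a b assume "a \<in> transversal s xs" "b \<in> transversal s xs" "a \<noteq> b"
    then obtain j j' where "j < k" "j' < k" "a = j * s + xs ! j" "b = j' * s + xs ! j'"
      using xs(2) by (auto simp: transversal_def)
    then show "{a, b} \<in> turan_edges k s"
      using \<open>a \<noteq> b\<close> vertex part(1) xs(2) by (intro turan_edgeI) auto
  qed
  ultimately show ?thesis by (simp add: clique_faces_def transversal_def)
qed

lemma inj_on_transversal: "inj_on (transversal s) {xs. set xs \<subseteq> {..<s} \<and> length xs = k}"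
proof (rule inj_onI)
  fix xs ys
  assume xs: "xs \<in> {xs. set xs \<subseteq> {..<s} \<and> length xs = k}"
    and ys: "ys \<in> {xs. set xs \<subseteq> {..<s} \<and> length xs = k}"
    and eq: "transversal s xs = transversal s ys"
  have "xs ! j = ys ! j" if "j < k" for j
  proof -
    have "j * s + xs ! j \<in> transversal s ys" using eq that xs by (auto simp: transversal_def)
    then obtain j' where "j' < k" and eq': "j * s + xs ! j = j' * s + ys ! j'"
      using ys by (auto simp: transversal_def)
    have "(j * s + xs ! j) div s = (j' * s + ys ! j') div s"
      "(j * s + xs ! j) mod s = (j' * s + ys ! j') mod s"
      using eq' by simp_all
    then show ?thesis
      using transversal_vertex_div_mod[of xs s j] transversal_vertex_div_mod[of ys s j']
        xs ys that \<open>j' < k\<close> by simp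
  qed
  then show "xs = ys" using xs ys by (simp add: list_eq_iff_nth_eq)
qed

lemma card_turan_facets_ge:
  "s ^ k \<le> card (clique_faces (turan_vertices k s) (turan_edges k s) (int k - 1))"
proof -
  let ?L = "{xs. set xs \<subseteq> {..<s} \<and> length xs = k}"
  have "s ^ k = card (transversal s ` ?L)"
    using card_lists_length_eq[of "{..<s}" k] inj_on_transversal[of s k] by (simp add: card_image)
  also have "\<dots> \<le> card (clique_faces (turan_vertices k s) (turan_edges k s) (int k - 1))"
    using transversal_in_clique_faces
    by (intro card_mono finite_clique_faces) (auto simp: turan_vertices_def)
  finally show ?thesis .
qed

lemma card_turan_ridges_le:
  assumes "1 \<le> s" "1 \<le> k"
  shows "card (clique_faces (turan_vertices k s) (turan_edges k s) (int k - 2)) \<le> (k * s) ^ (k - 1)"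
proof -
  have "clique_faces (turan_vertices k s) (turan_edges k s) (int k - 2)
      \<subseteq> {B. B \<subseteq> turan_vertices k s \<and> card B = k - 1}"
    using assms(2) by (auto simp: clique_faces_def is_clique_def)
  then have "card (clique_faces (turan_vertices k s) (turan_edges k s) (int k - 2))
      \<le> (k * s) choose (k - 1)"
    using card_mono[of "{B. B \<subseteq> turan_vertices k s \<and> card B = k - 1}"]
    by (simp add: n_subsets turan_vertices_def)
  also have "\<dots> \<le> (k * s) ^ (k - 1)"
    using assms by (intro binomial_le_pow) (metis diff_le_self le_trans mult_le_mono2 mult_1_right)
  finally show ?thesis .
qed

lemma total_betti_turan_ge:
  assumes "1 \<le> s" "1 \<le> k"
  shows "s ^ k \<le> total_betti (K :: 'k::field itself) (turan_vertices k s) (turan_edges k s)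
    + (k * s) ^ (k - 1)"
proof -
  let ?V = "turan_vertices k s" and ?E = "turan_edges k s"
  have "finite ?V" "k \<le> card ?V" using assms by (simp_all add: turan_vertices_def)
  then have "reduced_betti K ?V ?E (int k - 1) \<le> total_betti K ?V ?E"
    by (intro reduced_betti_le_total_betti) simp_all
  moreover have "int (card (clique_faces ?V ?E (int k - 1)))
      - int (card (clique_faces ?V ?E (int k - 2))) \<le> int (reduced_betti K ?V ?E (int k - 1))"
    using card_clique_faces_diff_le_reduced_betti[of ?V ?E "int k - 1" K]
      clique_faces_turan_top[of k s]
    by (simp add: turan_vertices_def)
  ultimately show ?thesis
    using card_turan_facets_ge[of s k] card_turan_ridges_le[OF assms] by linarith
qed

lemma finite_b_H_set:
  fixes K :: "'k::field itself" and n k :: nat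
  assumes "1 \<le> i1" "i1 \<le> 2"
  defines "S \<equiv> {total_betti K V E | V E.
      simple_graph V E \<and> V \<subseteq> {..<n} \<and> K_free i1 k V E}"
  shows "finite S" and "\<forall>b\<in>S. b \<le> (n + 1) ^ k"
proof -
  show bound: "\<forall>b\<in>S. b \<le> (n + 1) ^ k"
  proof
    fix b assume "b \<in> S"
    then obtain V E where b: "b = total_betti K V E" and G: "simple_graph V E" "V \<subseteq> {..<n}"
      and free: "K_free i1 k V E"
      unfolding S_def by blast
    have "finite V" using G(1) by (simp add: simple_graph_def)
    moreover have "card V \<le> n" using card_mono[OF _ G(2)] by simp
    ultimately show "b \<le> (n + 1) ^ k"
      using total_betti_le_if_K_free[OF assms(1,2) _ free, of K] b
        power_mono[of "card V + 1" "n + 1" k] by simp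
  qed
  then show "finite S" by (meson finite_atMost finite_subset subsetI atMost_iff)
qed

lemma K_free_empty:
  assumes "1 \<le> i1"
  shows "K_free i1 k {} E"
proof
  assume "has_induced_copy (K_vertices i1 k) (K_edges i1 k) {} E"
  then obtain f where "f ` K_vertices i1 k \<subseteq> {}" by (auto simp: has_induced_copy_def)
  moreover have "(0, 0) \<in> K_vertices i1 k" using assms by simp
  ultimately show False by blast
qed

lemma total_betti_le_b_H:
  assumes "1 \<le> i1" "i1 \<le> 2" "simple_graph V E" "V \<subseteq> {..<n}" "K_free i1 k V E"
  shows "total_betti (K :: 'k::field itself) V E \<le> b_H K (K_vertices i1 k) (K_edges i1 k) n"
  unfolding b_H_def using finite_b_H_set[OF assms(1,2), of K n k] assms(3-5)
  by (intro Max_ge) blast+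

lemma b_H_le:
  assumes "1 \<le> i1" "i1 \<le> 2"
  shows "b_H (K :: 'k::field itself) (K_vertices i1 k) (K_edges i1 k) n \<le> (n + 1) ^ k"
proof -
  have "total_betti K {} {} \<in> {total_betti K V E | V E.
      simple_graph V E \<and> V \<subseteq> {..<n} \<and> K_free i1 k V E}"
    using K_free_empty[OF assms(1), of k "{} :: nat set set"] by (auto simp: simple_graph_def)
  then show ?thesis
    unfolding b_H_def using finite_b_H_set[OF assms, of K n k] by (subst Max_le_iff) auto
qed

lemma b_H_ge_1:
  assumes "1 \<le> i1" "i1 \<le> 2"
  shows "1 \<le> b_H (K :: 'k::field itself) (K_vertices i1 k) (K_edges i1 k) n"
proof -
  have "total_betti K {} {} \<le> b_H K (K_vertices i1 k) (K_edges i1 k) n"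
    by (rule total_betti_le_b_H[OF assms _ _ K_free_empty[OF assms(1)]])
      (simp_all add: simple_graph_def)
  then show ?thesis using total_betti_empty[of K "{}"] by simp
qed

text \<open>Parts of size \<open>s = n div k\<close>: then \<open>s^k\<close> dominates \<open>(k s)^(k - 1)\<close> once
  \<open>s \<ge> 2 (2 k^(k - 1) + 1)\<close>, and \<open>n \<le> 2 k s\<close>.\<close>
lemma b_H_ge_power:
  assumes "1 \<le> i1" "i1 \<le> 2" "1 \<le> k" "2 * k * (2 * k ^ (k - 1) + 1) \<le> n"
  shows "n ^ k \<le> 2 * (2 * k) ^ k * b_H (K :: 'k::field itself) (K_vertices i1 k) (K_edges i1 k) n"
proof -
  let ?b = "b_H K (K_vertices i1 k) (K_edges i1 k) n"
  define s where "s = n div k"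
  have s_large: "2 * (2 * k ^ (k - 1) + 1) \<le> s"
    using div_le_mono[OF assms(4), of k] assms(3) by (simp add: s_def)
  then have s: "1 \<le> s" by simp
  have "k * s \<le> n" by (simp add: s_def)
  then have "total_betti K (turan_vertices k s) (turan_edges k s) \<le> ?b"
    using total_betti_le_b_H[OF assms(1,2) simple_graph_turan _ K_free_turan[OF assms(1)]]
    by (simp add: turan_vertices_def)
  then have lower: "s ^ k \<le> ?b + (k * s) ^ (k - 1)"
    using total_betti_turan_ge[OF s assms(3), of K] by simp
  have "2 * (k * s) ^ (k - 1) = (2 * k ^ (k - 1)) * s ^ (k - 1)"
    by (simp add: power_mult_distrib)
  also have "\<dots> \<le> s * s ^ (k - 1)" using s_large by (intro mult_right_mono) simp_all
  also have "\<dots> = s ^ k" using assms(3) by (simp add: power_eq_if)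
  finally have "s ^ k \<le> 2 * ?b" using lower by linarith
  moreover have "n \<le> 2 * k * s"
  proof -
    have "n = k * s + n mod k" by (simp add: s_def)
    moreover have "n mod k < k" using assms(3) by simp
    ultimately have "n < k * s + k" by linarith
    also have "\<dots> \<le> 2 * k * s" using s by simp
    finally show ?thesis by simp
  qed
  then have "n ^ k \<le> (2 * k) ^ k * s ^ k"
    using power_mono[of n "2 * k * s" k] by (simp add: power_mult_distrib)
  ultimately have "n ^ k \<le> (2 * k) ^ k * (2 * ?b)" by (meson mult_le_mono2 order_trans)
  then show ?thesis by (simp add: ac_simps)
qed

lemma b_H_eventually_ge:
  assumes "1 \<le> i1" "i1 \<le> 2"
  obtains c :: real where "c > 0"
    "\<forall>\<^sub>F n in sequentially.
      c * real n ^ k \<le> real (b_H (K :: 'k::field itself) (K_vertices i1 k) (K_edges i1 k) n)"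
proof (cases "k = 0")
  case True
  then show ?thesis using that[of 1] b_H_ge_1[OF assms, of K k] by simp
next
  case False
  let ?c = "1 / (2 * (2 * real k) ^ k)"
  have bound: "?c * real n ^ k \<le> real (b_H K (K_vertices i1 k) (K_edges i1 k) n)"
    if "2 * k * (2 * k ^ (k - 1) + 1) \<le> n" for n
  proof -
    have "real (n ^ k) \<le> real (2 * (2 * k) ^ k * b_H K (K_vertices i1 k) (K_edges i1 k) n)"
      using b_H_ge_power[OF assms _ that, of K] False by (simp only: of_nat_le_iff)
    then show ?thesis using False by (simp add: field_simps)
  qed
  have "?c > 0" using False by simp
  moreover have "\<forall>\<^sub>F n in sequentially.
      ?c * real n ^ k \<le> real (b_H K (K_vertices i1 k) (K_edges i1 k) n)"
    by (rule eventually_mono[OF eventually_ge_at_top bound])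
  ultimately show ?thesis by (rule that)
qed

theorem theorem1p5:
  fixes i1 m :: nat
  assumes "1 \<le> i1" and "i1 \<le> 2" and "1 \<le> m"
  shows "(\<lambda>n. real (b_H TYPE('k::field)
              (cmp_vertices (i1 # replicate (m - 1) 1))
              (cmp_edges (i1 # replicate (m - 1) 1)) n))
         \<in> \<Theta>(\<lambda>n. real n ^ (m - 1))"
proof -
  let ?b = "\<lambda>n. b_H TYPE('k) (K_vertices i1 (m - 1)) (K_edges i1 (m - 1)) n"
  obtain c :: real
    where c: "c > 0" and lower: "\<forall>\<^sub>F n in sequentially. c * real n ^ (m - 1) \<le> real (?b n)"
    using b_H_eventually_ge[OF assms(1,2)] by blast
  have bound: "real (?b n) \<le> 2 ^ (m - 1) * real n ^ (m - 1)" if "1 \<le> n" for n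
  proof -
    have "?b n \<le> (n + 1) ^ (m - 1)" by (rule b_H_le[OF assms(1,2)])
    also have "\<dots> \<le> (2 * n) ^ (m - 1)" using that by (intro power_mono) simp_all
    finally have "real (?b n) \<le> real ((2 * n) ^ (m - 1))" by (simp only: of_nat_le_iff)
    then show ?thesis by (simp add: power_mult_distrib)
  qed
  have upper: "\<forall>\<^sub>F n in sequentially. real (?b n) \<le> 2 ^ (m - 1) * real n ^ (m - 1)"
    by (rule eventually_mono[OF eventually_ge_at_top bound])
  show ?thesis
    by (rule bigthetaI'[OF c, of "2 ^ (m - 1)"]) (use eventually_conj[OF lower upper] in simp_all)
qed

end
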